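(* Let $M_1$ be the trefoil exterior, with $\pi_1(M_1)=B_3=\langle\sigma_1,\sigma_2\mid\sigma_1\sigma_2\sigma_1=\sigma_2\sigma_1\sigma_2\rangle$, peripheral subgroup $\langle\sigma_2,\Delta^2\rangle$ where $\Delta=\sigma_1\sigma_2\sigma_1$ (meridian $\sigma_2$), and let $M_2$ be the twisted $I$-bundle over the Klein bottle, with $\pi_1(M_2)=\langle x,y\mid xyx^{-1}=y^{-1}\rangle$ and peripheral subgroup $\langle y,x^2\rangle$. Let $M=M_1\cup_\phi M_2$, where the boundary homeomorphism $\phi$ acts on peripheral subgroups by $\phi(\sigma_2)=y^{-1}$, $\phi(\Delta^2)=y^{-1}x^2$. Then there is no slope $\alpha$ on $\partial M_1$ such that both $\alpha$ and $\phi(\alpha)$ are left-orderable slopes; i.e. the criterion "a left-orderable slope $\alpha$ with $\phi_*(\alpha)$ left-orderable implies $\pi_1(M)$ left-orderable" cannot be applied to $M$.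
   Context: For a 3-manifold $N$ with torus boundary, a slope is an isotopy class of essential simple closed curve on $\partial N$ (a primitive peripheral element up to sign), and it is a left-orderable slope if $\pi_1(N)/\langle\langle\alpha\rangle\rangle$ (the fundamental group of the Dehn filling along $\alpha$) is left-orderable; the trivial group is not left-orderable. *)

theory Defs
  imports Main "HOL-Algebra.Group"
begin

text \<open>A letter is a generator together with a sign (True = positive, False = inverse).
  A word is a list of letters.\<close>

type_synonym 'a word = "('a \<times> bool) list"

definition inv_word :: "'a word \<Rightarrow> 'a word" where
  "inv_word w = rev (map (\<lambda>(a, b). (a, \<not> b)) w)"

definition gen :: "'a \<Rightarrow> 'a word" where
  "gen a = [(a, True)]"

definition word_pow :: "'a word \<Rightarrow> int \<Rightarrow> 'a word" where
  "word_pow w k = (if 0 \<le> k then concat (replicate (nat k) w)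
                   else concat (replicate (nat (- k)) (inv_word w)))"

inductive pres_eq :: "'a word set \<Rightarrow> 'a word \<Rightarrow> 'a word \<Rightarrow> bool" for R where
  refl: "pres_eq R w w"
| sym: "pres_eq R u v \<Longrightarrow> pres_eq R v u"
| trans: "pres_eq R u v \<Longrightarrow> pres_eq R v w \<Longrightarrow> pres_eq R u w"
| cancel: "pres_eq R (u @ [(a, b), (a, \<not> b)] @ v) (u @ v)"
| relator: "r \<in> R \<Longrightarrow> pres_eq R (u @ r @ v) (u @ v)"

definition presented_group :: "'a word set \<Rightarrow> ('a word set) monoid" where
  "presented_group R =
     \<lparr> carrier = UNIV // {(u, v). pres_eq R u v},
       mult = (\<lambda>A B. {w. \<exists>u\<in>A. \<exists>v\<in>B. pres_eq R w (u @ v)}),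
       one = {w. pres_eq R w []} \<rparr>"

definition left_orderable :: "('g, 'm) monoid_scheme \<Rightarrow> bool" where
  "left_orderable G \<longleftrightarrow> group G \<and> carrier G \<noteq> {\<one>\<^bsub>G\<^esub>} \<and>
     (\<exists>less :: 'g \<Rightarrow> 'g \<Rightarrow> bool.
        (\<forall>g\<in>carrier G. \<not> less g g) \<and>
        (\<forall>g\<in>carrier G. \<forall>h\<in>carrier G. \<forall>k\<in>carrier G. less g h \<longrightarrow> less h k \<longrightarrow> less g k) \<and>
        (\<forall>g\<in>carrier G. \<forall>h\<in>carrier G. g = h \<or> less g h \<or> less h g) \<and>
        (\<forall>g\<in>carrier G. \<forall>h\<in>carrier G. \<forall>k\<in>carrier G.
            less h k \<longrightarrow> less (g \<otimes>\<^bsub>G\<^esub> h) (g \<otimes>\<^bsub>G\<^esub> k)))"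

text \<open>Trefoil exterior: \<open>\<pi>\<^sub>1 = B\<^sub>3 = \<langle>\<sigma>\<^sub>1, \<sigma>\<^sub>2 | \<sigma>\<^sub>1\<sigma>\<^sub>2\<sigma>\<^sub>1 = \<sigma>\<^sub>2\<sigma>\<^sub>1\<sigma>\<^sub>2\<rangle>\<close>.\<close>
datatype gen_B3 = Sig1 | Sig2

definition Delta :: "gen_B3 word" where
  "Delta = gen Sig1 @ gen Sig2 @ gen Sig1"

definition B3_rels :: "gen_B3 word set" where
  "B3_rels = {Delta @ inv_word (gen Sig2 @ gen Sig1 @ gen Sig2)}"

text \<open>Twisted I-bundle over the Klein bottle: \<open>\<langle>x, y | x y x\<^sup>-\<^sup>1 = y\<^sup>-\<^sup>1\<rangle>\<close>.\<close>
datatype gen_K = GX | GY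

definition K_rels :: "gen_K word set" where
  "K_rels = {gen GX @ gen GY @ inv_word (gen GX) @ gen GY}"

text \<open>The slope \<open>\<sigma>\<^sub>2\<^sup>p \<Delta>\<^sup>2\<^sup>q\<close> on \<open>\<partial>M\<^sub>1\<close> and its image under \<open>\<phi>\<close>:
  \<open>\<phi>(\<sigma>\<^sub>2) = y\<^sup>-\<^sup>1\<close>, \<open>\<phi>(\<Delta>\<^sup>2) = y\<^sup>-\<^sup>1x\<^sup>2\<close>.\<close>
definition slope1 :: "int \<Rightarrow> int \<Rightarrow> gen_B3 word" where
  "slope1 p q = word_pow (gen Sig2) p @ word_pow (Delta @ Delta) q"

definition slope2 :: "int \<Rightarrow> int \<Rightarrow> gen_K word" where
  "slope2 p q = word_pow (inv_word (gen GY)) p @ word_pow (inv_word (gen GY) @ gen GX @ gen GX) q"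

end

theory Submission
  imports Defs
begin

text \<open>If a left-orderable group contains elements \<open>x, y\<close> with \<open>x y x\<^sup>-\<^sup>1 = y\<^sup>-\<^sup>1\<close> and
  \<open>y\<^sup>-\<^sup>p (y\<^sup>-\<^sup>1 x\<^sup>2)\<^sup>q = 1\<close>, \<open>q \<noteq> 0\<close>, then \<open>x\<^sup>2\<close> commutes with \<open>y\<close>, so \<open>x\<^sup>2\<^sup>q = y\<^sup>p\<^sup>+\<^sup>q\<close>;
  conjugating by \<open>x\<close> fixes the left side and inverts the right side, hence \<open>x\<^sup>4\<^sup>q = 1\<close>.
  Left-orderable groups are torsion-free, so \<open>x = 1\<close> and then \<open>y\<^sup>2 = 1\<close>, \<open>y = 1\<close>: the filling
  of the Klein bottle piece along \<open>\<phi>(\<alpha>)\<close> is trivial whenever \<open>q \<noteq> 0\<close>. If \<open>q = 0\<close>, coprimality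
  forces \<open>p \<noteq> 0\<close> and the filling of \<open>B\<^sub>3\<close> imposes \<open>\<sigma>\<^sub>2\<^sup>p = 1\<close>; torsion-freeness kills \<open>\<sigma>\<^sub>2\<close>, and
  then the braid relation kills \<open>\<sigma>\<^sub>1\<close>. A trivial group is not left-orderable.\<close>

lemma pres_eq_append_context:
  assumes "pres_eq R u v"
  shows "pres_eq R (x @ u @ y) (x @ v @ y)"
  using assms
proof (induction rule: pres_eq.induct)
  case (cancel u a b v)
  show ?case using pres_eq.cancel[of R "x @ u" a b "v @ y"] by simp
next
  case (relator r u v)
  show ?case using pres_eq.relator[OF relator, of "x @ u" "v @ y"] by simp
qed (auto intro: pres_eq.intros)

definition word_class :: "'a word set \<Rightarrow> 'a word \<Rightarrow> 'a word set" where
  "word_class R w = {v. pres_eq R w v}"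

lemma carrier_presented_group: "carrier (presented_group R) = range (word_class R)"
  by (auto simp: presented_group_def quotient_def word_class_def)

lemma word_class_in_carrier [simp]: "word_class R w \<in> carrier (presented_group R)"
  by (simp add: carrier_presented_group)

lemma one_presented_group: "\<one>\<^bsub>presented_group R\<^esub> = word_class R []"
  by (auto simp: presented_group_def word_class_def intro: pres_eq.sym)

lemma word_class_eqI: "pres_eq R u v \<Longrightarrow> word_class R u = word_class R v"
  unfolding word_class_def by (blast intro: pres_eq.trans pres_eq.sym)

lemma word_class_append:
  "word_class R (u @ v) = word_class R u \<otimes>\<^bsub>presented_group R\<^esub> word_class R v"
proof -
  have "pres_eq R (u @ v) w \<longleftrightarrow>
      (\<exists>u'. pres_eq R u u' \<and> (\<exists>v'. pres_eq R v v' \<and> pres_eq R w (u' @ v')))" for w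
  proof
    assume "pres_eq R (u @ v) w"
    then show "\<exists>u'. pres_eq R u u' \<and> (\<exists>v'. pres_eq R v v' \<and> pres_eq R w (u' @ v'))"
      by (blast intro: pres_eq.refl pres_eq.sym)
  next
    assume "\<exists>u'. pres_eq R u u' \<and> (\<exists>v'. pres_eq R v v' \<and> pres_eq R w (u' @ v'))"
    then obtain u' v' where "pres_eq R u u'" "pres_eq R v v'" "pres_eq R w (u' @ v')" by blast
    then have "pres_eq R (u @ v) (u' @ v)" "pres_eq R (u' @ v) (u' @ v')" "pres_eq R (u' @ v') w"
      using pres_eq_append_context[of R _ _ "[]"] pres_eq_append_context[of R _ _ _ "[]"]
      by (force intro: pres_eq.sym)+
    then show "pres_eq R (u @ v) w" by (blast intro: pres_eq.trans)
  qed
  then show ?thesis by (auto simp: presented_group_def word_class_def)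
qed

lemma word_class_relator: "r \<in> R \<Longrightarrow> word_class R r = \<one>\<^bsub>presented_group R\<^esub>"
  using pres_eq.relator[of r R "[]" "[]"] by (simp add: one_presented_group word_class_eqI)

context
  fixes R :: "'a word set"
  assumes group: "group (presented_group R)"
begin

interpretation G: group "presented_group R" by (rule group)

lemma word_class_inv_letter:
  "inv\<^bsub>presented_group R\<^esub> (word_class R [(a, b)]) = word_class R [(a, \<not> b)]"
proof (rule G.inv_equality)
  have "pres_eq R [(a, \<not> b), (a, \<not> \<not> b)] []"
    using pres_eq.cancel[of R "[]" a "\<not> b" "[]"] by simp
  then show "word_class R [(a, \<not> b)] \<otimes>\<^bsub>presented_group R\<^esub> word_class R [(a, b)] = \<one>\<^bsub>presented_group R\<^esub>"
    by (simp add: word_class_append[symmetric] one_presented_group word_class_eqI)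
qed simp_all

lemma word_class_inv_word:
  "word_class R (inv_word w) = inv\<^bsub>presented_group R\<^esub> (word_class R w)"
proof (induction w)
  case Nil
  then show ?case by (simp add: inv_word_def one_presented_group[symmetric])
next
  case (Cons x w)
  obtain a b where x: "x = (a, b)" by force
  have "inv_word (x # w) = inv_word w @ [(a, \<not> b)]" by (simp add: inv_word_def x)
  then show ?case
    using Cons word_class_append[of R "[x]" w]
    by (simp add: word_class_append word_class_inv_letter[symmetric] x G.inv_mult_group)
qed

lemma word_class_word_pow:
  "word_class R (word_pow w k) = word_class R w [^]\<^bsub>presented_group R\<^esub> k"
proof -
  have concat_replicate: "word_class R (concat (replicate n v)) = word_class R v [^]\<^bsub>presented_group R\<^esub> n"
    for n v
    by (induction n)
      (simp_all add: one_presented_group word_class_append G.nat_pow_Suc2 del: nat_pow_Suc G.nat_pow_Suc)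
  show ?thesis
    by (simp add: word_pow_def concat_replicate word_class_inv_word G.nat_pow_inv int_pow_def2
        del: pow_nat)
qed

lemma presented_group_trivialI:
  assumes "\<And>a. word_class R (gen a) = \<one>\<^bsub>presented_group R\<^esub>"
  shows "carrier (presented_group R) = {\<one>\<^bsub>presented_group R\<^esub>}"
proof -
  have letter: "word_class R [(a, b)] = \<one>\<^bsub>presented_group R\<^esub>" for a b
    using assms[of a] word_class_inv_letter[of a True] by (cases b) (simp_all add: gen_def)
  have "word_class R w = \<one>\<^bsub>presented_group R\<^esub>" for w
  proof (induction w)
    case (Cons x w)
    then show ?case
      using word_class_append[of R "[x]" w] letter[of "fst x" "snd x"] by simp
  qed (simp add: one_presented_group)
  then show ?thesis by (auto simp: carrier_presented_group)
qed

end

lemma left_orderable_presented_group_generator: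
  assumes "left_orderable (presented_group R)"
  obtains a where "word_class R (gen a) \<noteq> \<one>\<^bsub>presented_group R\<^esub>"
proof -
  have "group (presented_group R)" "carrier (presented_group R) \<noteq> {\<one>\<^bsub>presented_group R\<^esub>}"
    using assms unfolding left_orderable_def by blast+
  then show ?thesis using presented_group_trivialI that by metis
qed

definition torsion_free :: "('g, 'm) monoid_scheme \<Rightarrow> bool" where
  "torsion_free G \<longleftrightarrow>
     (\<forall>g\<in>carrier G. \<forall>n::nat. 0 < n \<longrightarrow> g [^]\<^bsub>G\<^esub> n = \<one>\<^bsub>G\<^esub> \<longrightarrow> g = \<one>\<^bsub>G\<^esub>)"

lemma (in group) left_orderable_imp_torsion_free:
  assumes "left_orderable G"
  shows "torsion_free G"
  unfolding torsion_free_def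
proof (intro ballI allI impI)
  fix g and n :: nat
  assume g: "g \<in> carrier G" and "0 < n" and g_pow: "g [^] n = \<one>"
  obtain m where n: "n = Suc m" using \<open>0 < n\<close> gr0_implies_Suc by blast
  from assms obtain less where
    irrefl: "\<forall>g\<in>carrier G. \<not> less g g" and
    transitive: "\<forall>g\<in>carrier G. \<forall>h\<in>carrier G. \<forall>k\<in>carrier G. less g h \<longrightarrow> less h k \<longrightarrow> less g k" and
    total: "\<forall>g\<in>carrier G. \<forall>h\<in>carrier G. g = h \<or> less g h \<or> less h g" and
    invariant: "\<forall>g\<in>carrier G. \<forall>h\<in>carrier G. \<forall>k\<in>carrier G. less h k \<longrightarrow> less (g \<otimes> h) (g \<otimes> k)"
    unfolding left_orderable_def by blast
  have pos_pow: "less \<one> (h [^] Suc k)" if h: "h \<in> carrier G" "less \<one> h" for h k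
  proof (induction k)
    case 0
    then show ?case using h by simp
  next
    case (Suc k)
    have "less (h \<otimes> \<one>) (h \<otimes> h [^] Suc k)" using invariant Suc.IH h by blast
    then have "less h (h [^] Suc (Suc k))" using h by (metis r_one nat_pow_Suc2)
    then show ?case using transitive h by (meson nat_pow_closed one_closed)
  qed
  show "g = \<one>"
  proof (rule ccontr)
    assume "g \<noteq> \<one>"
    then have "less \<one> g \<or> less g \<one>" using total g by auto
    moreover have "less \<one> (inv g)" if "less g \<one>"
      using invariant that g by (metis inv_closed l_inv one_closed r_one)
    ultimately obtain h where h: "h \<in> carrier G" "less \<one> h" and "h [^] n = \<one>"
      using g g_pow by (metis inv_closed inv_one nat_pow_inv)
    then have "less \<one> \<one>" using pos_pow[OF h, of m] n by simp
    then show False using irrefl by simp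
  qed
qed

lemma (in group) torsion_free_int_pow_eq_one:
  assumes "torsion_free G" and g: "g \<in> carrier G" and "g [^] (k::int) = \<one>" and "k \<noteq> 0"
  shows "g = \<one>"
proof -
  have "g [^] nat \<bar>k\<bar> = \<one>"
    using assms(3) g by (cases "k < 0") (simp_all add: int_pow_def2 del: pow_nat)
  moreover have "0 < nat \<bar>k\<bar>" using \<open>k \<noteq> 0\<close> by simp
  ultimately show ?thesis using assms(1) g unfolding torsion_free_def by blast
qed

lemma (in group) conj_int_pow:
  assumes "x \<in> carrier G" "g \<in> carrier G"
  shows "(x \<otimes> g \<otimes> inv x) [^] (k::int) = x \<otimes> g [^] k \<otimes> inv x"
proof -
  have "(\<lambda>g. x \<otimes> g \<otimes> inv x) \<in> hom G G"
    using assms(1)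
    by (intro homI) (simp_all add: m_assoc, metis inv_closed l_inv l_one m_assoc m_closed)
  from hom_int_pow[OF this assms(2) is_group is_group] show ?thesis by simp
qed

lemma (in group) klein_relation_square_commutes:
  assumes X: "X \<in> carrier G" and Y: "Y \<in> carrier G" and conj: "X \<otimes> Y \<otimes> inv X = inv Y"
  shows "(X \<otimes> X) \<otimes> Y = Y \<otimes> (X \<otimes> X)"
proof -
  have XY: "X \<otimes> Y = inv Y \<otimes> X"
    using conj X Y by (simp add: inv_solve_right')
  have "X \<otimes> inv Y \<otimes> inv X = inv (X \<otimes> Y \<otimes> inv X)"
    using X Y by (simp add: inv_mult_group m_assoc)
  then have XiY: "X \<otimes> inv Y = Y \<otimes> X"
    using conj X Y by (simp add: inv_solve_right')
  have "(X \<otimes> X) \<otimes> Y = X \<otimes> (inv Y \<otimes> X)" using X Y by (simp add: m_assoc XY)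
  also have "\<dots> = (Y \<otimes> X) \<otimes> X" using X Y by (simp flip: m_assoc XiY)
  finally show ?thesis using X Y by (simp add: m_assoc)
qed

lemma (in group) klein_relation_slope_trivial:
  assumes tf: "torsion_free G" and X: "X \<in> carrier G" and Y: "Y \<in> carrier G"
    and rel: "X \<otimes> (Y \<otimes> (inv X \<otimes> Y)) = \<one>"
    and slope: "(inv Y) [^] (p::int) \<otimes> (inv Y \<otimes> (X \<otimes> X)) [^] q = \<one>"
    and "(q::int) \<noteq> 0"
  shows "X = \<one> \<and> Y = \<one>"
proof -
  define A where "A = X \<otimes> X"
  have A: "A \<in> carrier G" using X by (simp add: A_def)
  have conj: "X \<otimes> Y \<otimes> inv X = inv Y"
    using inv_equality[of "X \<otimes> Y \<otimes> inv X" Y] rel X Y by (simp add: m_assoc)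
  have "A \<otimes> Y = Y \<otimes> A"
    using klein_relation_square_commutes[OF X Y conj] by (simp add: A_def)
  then have comm: "inv Y \<otimes> A = A \<otimes> inv Y"
    using A Y by (metis inv_solve_left' inv_solve_right' m_assoc inv_closed m_closed)
  have "(inv Y \<otimes> A) [^] q = inv Y [^] q \<otimes> A [^] q"
    using int_pow_mult_distrib[OF comm] A Y by simp
  then have "(inv Y) [^] (p + q) \<otimes> A [^] q = \<one>"
    using slope Y A by (simp add: A_def[symmetric] int_pow_mult m_assoc)
  then have Aq: "A [^] q = Y [^] (p + q)"
    using Y A by (simp add: int_pow_inv inv_solve_left')
  have "A [^] q = X \<otimes> A [^] q \<otimes> inv X"
    using conj_int_pow[OF X A, of q] X by (simp add: A_def m_assoc)
  also have "\<dots> = inv (Y [^] (p + q))"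
    using conj_int_pow[OF X Y, of "p + q"] conj Y by (simp add: Aq int_pow_inv)
  finally have Aq_inv: "A [^] q = inv (Y [^] (p + q))" .
  have "A [^] (q + q) = A [^] q \<otimes> A [^] q" using A by (rule int_pow_mult)
  also have "\<dots> = \<one>" by (metis Aq Aq_inv Y int_pow_closed r_inv)
  finally have "A = \<one>" using torsion_free_int_pow_eq_one[OF tf A] \<open>q \<noteq> 0\<close> by simp
  then have "X [^] (2::int) = \<one>" using X by (simp add: A_def int_pow_def2 numeral_2_eq_2)
  then have X1: "X = \<one>" using torsion_free_int_pow_eq_one[OF tf X] by simp
  then have "Y [^] (2::int) = \<one>" using rel Y by (simp add: int_pow_def2 numeral_2_eq_2)
  then have "Y = \<one>" using torsion_free_int_pow_eq_one[OF tf Y] by simp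
  with X1 show ?thesis by simp
qed

lemma word_pow_zero [simp]: "word_pow w 0 = []"
  by (simp add: word_pow_def)

lemma trefoil_meridional_filling_not_left_orderable:
  assumes "p \<noteq> 0"
  shows "\<not> left_orderable (presented_group (insert (slope1 p 0) B3_rels))"
proof
  define R where "R = insert (slope1 p 0) B3_rels"
  let ?G = "presented_group R"
  assume "left_orderable (presented_group (insert (slope1 p 0) B3_rels))"
  then have lo: "left_orderable ?G" by (simp add: R_def)
  then interpret G: group ?G unfolding left_orderable_def by blast
  define S1 S2 where "S1 = word_class R (gen Sig1)" and "S2 = word_class R (gen Sig2)"
  have S: "S1 \<in> carrier ?G" "S2 \<in> carrier ?G" by (simp_all add: S1_def S2_def)
  have "slope1 p 0 \<in> R" by (simp add: R_def)
  from word_class_relator[OF this] have "S2 [^]\<^bsub>?G\<^esub> p = \<one>\<^bsub>?G\<^esub>"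
    by (simp add: slope1_def word_class_word_pow[OF G.is_group] S2_def)
  then have S2: "S2 = \<one>\<^bsub>?G\<^esub>"
    using G.torsion_free_int_pow_eq_one[OF G.left_orderable_imp_torsion_free[OF lo] S(2)] assms
    by simp
  have "Delta @ inv_word (gen Sig2 @ gen Sig1 @ gen Sig2) \<in> R" by (simp add: R_def B3_rels_def)
  from word_class_relator[OF this]
  have "S1 \<otimes>\<^bsub>?G\<^esub> S2 \<otimes>\<^bsub>?G\<^esub> S1 \<otimes>\<^bsub>?G\<^esub> inv\<^bsub>?G\<^esub> (S2 \<otimes>\<^bsub>?G\<^esub> S1 \<otimes>\<^bsub>?G\<^esub> S2) = \<one>\<^bsub>?G\<^esub>"
    by (simp add: Delta_def word_class_append word_class_inv_word[OF G.is_group]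
        S1_def S2_def G.m_assoc)
  then have "S1 = \<one>\<^bsub>?G\<^esub>" using S S2 by (simp add: G.m_assoc)
  with S2 show False
    using left_orderable_presented_group_generator[OF lo] by (metis S1_def S2_def gen_B3.exhaust)
qed

lemma klein_filling_not_left_orderable:
  assumes "q \<noteq> 0"
  shows "\<not> left_orderable (presented_group (insert (slope2 p q) K_rels))"
proof
  define R where "R = insert (slope2 p q) K_rels"
  let ?G = "presented_group R"
  assume "left_orderable (presented_group (insert (slope2 p q) K_rels))"
  then have lo: "left_orderable ?G" by (simp add: R_def)
  then interpret G: group ?G unfolding left_orderable_def by blast
  define X Y where "X = word_class R (gen GX)" and "Y = word_class R (gen GY)"
  have XY: "X \<in> carrier ?G" "Y \<in> carrier ?G" by (simp_all add: X_def Y_def)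
  have "gen GX @ gen GY @ inv_word (gen GX) @ gen GY \<in> R" by (simp add: R_def K_rels_def)
  from word_class_relator[OF this]
  have rel: "X \<otimes>\<^bsub>?G\<^esub> (Y \<otimes>\<^bsub>?G\<^esub> (inv\<^bsub>?G\<^esub> X \<otimes>\<^bsub>?G\<^esub> Y)) = \<one>\<^bsub>?G\<^esub>"
    by (simp add: word_class_append word_class_inv_word[OF G.is_group] X_def Y_def)
  have "slope2 p q \<in> R" by (simp add: R_def)
  from word_class_relator[OF this]
  have slope: "(inv\<^bsub>?G\<^esub> Y) [^]\<^bsub>?G\<^esub> p \<otimes>\<^bsub>?G\<^esub>
      (inv\<^bsub>?G\<^esub> Y \<otimes>\<^bsub>?G\<^esub> (X \<otimes>\<^bsub>?G\<^esub> X)) [^]\<^bsub>?G\<^esub> q = \<one>\<^bsub>?G\<^esub>"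
    by (simp add: slope2_def word_class_append word_class_word_pow[OF G.is_group]
        word_class_inv_word[OF G.is_group] X_def Y_def)
  have "X = \<one>\<^bsub>?G\<^esub>" "Y = \<one>\<^bsub>?G\<^esub>"
    using G.klein_relation_slope_trivial[OF G.left_orderable_imp_torsion_free[OF lo] XY rel slope]
      assms by simp_all
  then show False
    using left_orderable_presented_group_generator[OF lo] by (metis X_def Y_def gen_K.exhaust)
qed

theorem proposition25:
  fixes p q :: int
  assumes "coprime p q"
  shows "\<not> (left_orderable (presented_group (insert (slope1 p q) B3_rels)) \<and>
             left_orderable (presented_group (insert (slope2 p q) K_rels)))"
proof (cases "q = 0")
  case True
  then have "p \<noteq> 0" using assms by auto
  with True show ?thesis using trefoil_meridional_filling_not_left_orderable by simp
next
  case False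
  then show ?thesis using klein_filling_not_left_orderable by simp
qed

end
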